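(* Any deterministic scheduler for the serial-parallel scheduling problem on $p$ processors that is both decide-on-arrival and parallel-work-oblivious has awake-time competitive ratio $\Omega(\sqrt{p})$: there is an absolute constant $c>0$ such that for every such scheduler there is a task arrival process on which its awake time is at least $c\sqrt{p}$ times the optimal offline awake time.
   Context: Serial-parallel scheduling problem: $p$ identical processors. A task arrival process is a finite set of tasks $\tau_i=(\sigma_i,\pi_i,t_i)$ with arrival time $t_i\ge0$, serial work $\sigma_i$ and parallel work $\pi_i$, $1\le\pi_i/\sigma_i\le p$. A task is performed either by its serial job (work $\sigma_i$, at most one processor at any instant) or by its parallel job (work $\pi_i$, any number of processors, rate equal to number of processors); time is continuous, allocations may be fractional, preemption is allowed. A task is alive from arrival until completion; awake time is the measure of the set of times at which some task is alive. The optimal offline schedule knows everything in advance. A decide-on-arrival scheduler must decide immediately and irrevocably at each task's arrival which implementation to run. A parallel-work-oblivious scheduler learns each task's arrival time and serial work $\sigma_i$ but never its parallel work $\pi_i$. *)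

theory Defs
  imports "HOL-Analysis.Analysis"
begin

type_synonym task = "real \<times> real \<times> real"

definition ser :: "task \<Rightarrow> real" where "ser \<tau> = fst \<tau>"
definition par :: "task \<Rightarrow> real" where "par \<tau> = fst (snd \<tau>)"
definition arr :: "task \<Rightarrow> real" where "arr \<tau> = snd (snd \<tau>)"

text \<open>A task arrival process is a finite set of tasks, represented as a list
  indexed in nondecreasing order of arrival time.\<close>
definition valid_task :: "nat \<Rightarrow> task \<Rightarrow> bool" where
  "valid_task p \<tau> \<longleftrightarrow> 0 < ser \<tau> \<and> 0 \<le> arr \<tau> \<and>
     1 \<le> par \<tau> / ser \<tau> \<and> par \<tau> / ser \<tau> \<le> real p"

definition valid_instance :: "nat \<Rightarrow> task list \<Rightarrow> bool" where
  "valid_instance p I \<longleftrightarrow> (\<forall>\<tau>\<in>set I. valid_task p \<tau>) \<and> sorted (map arr I)"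

text \<open>A schedule: for each task index, the implementation chosen
  (True = parallel job, False = serial job) and a processor allocation
  (rate) as a function of continuous time.\<close>
type_synonym schedule = "(nat \<Rightarrow> bool) \<times> (nat \<Rightarrow> real \<Rightarrow> real)"

definition choice :: "schedule \<Rightarrow> nat \<Rightarrow> bool" where "choice sch = fst sch"
definition alloc :: "schedule \<Rightarrow> nat \<Rightarrow> real \<Rightarrow> real" where "alloc sch = snd sch"

definition work :: "task list \<Rightarrow> schedule \<Rightarrow> nat \<Rightarrow> real" where
  "work I sch i = (if choice sch i then par (I ! i) else ser (I ! i))"

definition done_by :: "task list \<Rightarrow> schedule \<Rightarrow> nat \<Rightarrow> real \<Rightarrow> bool" where
  "done_by I sch i T \<longleftrightarrow> arr (I ! i) \<le> T \<and>
     work I sch i \<le> integral {arr (I ! i)..T} (alloc sch i)"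

definition completion :: "task list \<Rightarrow> schedule \<Rightarrow> nat \<Rightarrow> real" where
  "completion I sch i = Inf {T. done_by I sch i T}"

definition valid_schedule :: "nat \<Rightarrow> task list \<Rightarrow> schedule \<Rightarrow> bool" where
  "valid_schedule p I sch \<longleftrightarrow>
     (\<forall>i < length I.
        (\<forall>s. 0 \<le> alloc sch i s) \<and>
        (\<forall>s. s < arr (I ! i) \<longrightarrow> alloc sch i s = 0) \<and>
        (\<forall>a b. alloc sch i integrable_on {a..b}) \<and>
        (\<not> choice sch i \<longrightarrow> (\<forall>s. alloc sch i s \<le> 1)) \<and>
        (\<exists>T. done_by I sch i T)) \<and>
     (\<forall>s. (\<Sum>i<length I. alloc sch i s) \<le> real p)"

definition awake :: "task list \<Rightarrow> schedule \<Rightarrow> real" where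
  "awake I sch = measure lborel (\<Union>i<length I. {arr (I ! i)..<completion I sch i})"

definition OPT :: "nat \<Rightarrow> task list \<Rightarrow> real" where
  "OPT p I = Inf (awake I ` {sch. valid_schedule p I sch})"

text \<open>Information available to a parallel-work-oblivious scheduler up to time t:
  which tasks have arrived, their arrival times and serial works, and which of
  them have completed (with completion times).  Never the parallel work.\<close>
definition obs_equal :: "task list \<Rightarrow> schedule \<Rightarrow> task list \<Rightarrow> schedule \<Rightarrow> real \<Rightarrow> bool" where
  "obs_equal I sch I' sch' t \<longleftrightarrow>
     (\<forall>i. (i < length I \<and> arr (I ! i) \<le> t) \<longleftrightarrow> (i < length I' \<and> arr (I' ! i) \<le> t)) \<and>
     (\<forall>i. i < length I \<and> arr (I ! i) \<le> t \<longrightarrow>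
          arr (I ! i) = arr (I' ! i) \<and> ser (I ! i) = ser (I' ! i) \<and>
          (completion I sch i \<le> t \<longleftrightarrow> completion I' sch' i \<le> t) \<and>
          (completion I sch i \<le> t \<longrightarrow> completion I sch i = completion I' sch' i))"

text \<open>A deterministic scheduler is a map from task arrival processes to schedules.
  It is valid if it always produces a valid schedule; it is online,
  decide-on-arrival and parallel-work-oblivious if whenever the observable
  information up to time t coincides for two processes, the implementation
  choices of all tasks arrived by time t coincide, and the allocations coincide
  on all times before t.\<close>
definition dao_pwo_scheduler :: "nat \<Rightarrow> (task list \<Rightarrow> schedule) \<Rightarrow> bool" where
  "dao_pwo_scheduler p S \<longleftrightarrow>
     (\<forall>I. valid_instance p I \<longrightarrow> valid_schedule p I (S I)) \<and>
     (\<forall>I I' t. valid_instance p I \<and> valid_instance p I' \<and> obs_equal I (S I) I' (S I') t \<longrightarrow>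
        (\<forall>i. i < length I \<and> arr (I ! i) \<le> t \<longrightarrow> choice (S I) i = choice (S I') i) \<and>
        (\<forall>i s. i < length I \<and> i < length I' \<and> s < t \<longrightarrow> alloc (S I) i s = alloc (S I') i s))"

end

(* Give the scheduler m = floor (sqrt p) tasks of unit serial work, all arriving
   at time 0, whose parallel work is either 1 or p.  Until some task completes,
   which cannot happen at time 0, the two instances look the same, so the
   scheduler makes the same choices on both.  If it runs some task serially when
   the parallel work is 1, it stays awake for time at least 1, whereas running
   every task in parallel on p / m processors finishes by m / p <= 1 / sqrt p.
   Otherwise it runs every task in parallel when the parallel work is p: total
   work m p on p processors keeps it awake for time at least m >= sqrt p / 2,
   whereas running every task serially finishes by time 1. *)

theory Submission
  imports Defs
begin

lemma alloc_le_procs: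
  assumes "valid_schedule p I sch" "i < length I"
  shows "alloc sch i s \<le> real p"
proof -
  have "\<forall>j\<in>{..<length I}. 0 \<le> alloc sch j s"
    using assms(1) unfolding valid_schedule_def by auto
  then have "alloc sch i s \<le> (\<Sum>j<length I. alloc sch j s)"
    using assms(2) by (intro member_le_sum) auto
  also have "\<dots> \<le> real p"
    using assms(1) unfolding valid_schedule_def by auto
  finally show ?thesis .
qed

lemma arr_le_completion:
  assumes "valid_schedule p I sch" "i < length I"
  shows "arr (I ! i) \<le> completion I sch i"
  unfolding completion_def
proof (rule cInf_greatest)
  show "{T. done_by I sch i T} \<noteq> {}"
    using assms unfolding valid_schedule_def by auto
qed (simp add: done_by_def)

lemma completion_ge_work_div_rate:
  assumes "valid_schedule p I sch" "i < length I" "\<forall>s. alloc sch i s \<le> B" "0 < B"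
  shows "arr (I ! i) + work I sch i / B \<le> completion I sch i"
  unfolding completion_def
proof (rule cInf_greatest)
  show "{T. done_by I sch i T} \<noteq> {}"
    using assms(1,2) unfolding valid_schedule_def by auto
next
  fix T assume "T \<in> {T. done_by I sch i T}"
  then have T: "arr (I ! i) \<le> T" and w: "work I sch i \<le> integral {arr (I ! i)..T} (alloc sch i)"
    unfolding done_by_def by auto
  have "alloc sch i integrable_on {arr (I ! i)..T}"
    using assms(1,2) unfolding valid_schedule_def by auto
  then have "integral {arr (I ! i)..T} (alloc sch i) \<le> integral {arr (I ! i)..T} (\<lambda>_. B)"
    by (rule integral_le) (use assms(3) in auto)
  with w T have "work I sch i \<le> B * (T - arr (I ! i))"
    by (simp add: mult.commute)
  with assms(4) show "arr (I ! i) + work I sch i / B \<le> T"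
    by (simp add: field_simps)
qed

lemma work_le_integral_alloc:
  assumes "valid_schedule p I sch" "i < length I" "completion I sch i < T"
  shows "work I sch i \<le> integral {arr (I ! i)..T} (alloc sch i)"
proof -
  have "{T. done_by I sch i T} \<noteq> {}"
    using assms(1,2) unfolding valid_schedule_def by auto
  from cInf_lessD[OF this assms(3)[unfolded completion_def]]
  obtain T' where T': "done_by I sch i T'" "T' < T"
    by blast
  then have "work I sch i \<le> integral {arr (I ! i)..T'} (alloc sch i)"
    unfolding done_by_def by simp
  also have "\<dots> \<le> integral {arr (I ! i)..T} (alloc sch i)"
  proof (rule integral_subset_le)
    show "{arr (I ! i)..T'} \<subseteq> {arr (I ! i)..T}"
      using T'(2) by auto
  qed (use assms(1,2) in \<open>auto simp: valid_schedule_def\<close>)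
  finally show ?thesis .
qed

lemma sum_integral_alloc_le:
  assumes "valid_schedule p I sch" "a \<le> b"
  shows "(\<Sum>i<length I. integral {a..b} (alloc sch i)) \<le> real p * (b - a)"
proof -
  have intg: "\<And>i. i \<in> {..<length I} \<Longrightarrow> alloc sch i integrable_on {a..b}"
    using assms(1) unfolding valid_schedule_def by auto
  have "(\<Sum>i<length I. integral {a..b} (alloc sch i)) = integral {a..b} (\<lambda>s. \<Sum>i<length I. alloc sch i s)"
    by (rule integral_sum[symmetric]) (use intg in auto)
  also have "\<dots> \<le> integral {a..b} (\<lambda>_. real p)"
    using assms(1) unfolding valid_schedule_def
    by (intro integral_le integrable_sum intg) auto
  also have "\<dots> = real p * (b - a)"
    using assms(2) by simp
  finally show ?thesis .
qed

lemma awake_eq_Max_completion: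
  assumes "valid_schedule p I sch" "I \<noteq> []" "\<forall>i<length I. arr (I ! i) = 0"
  shows "awake I sch = Max (completion I sch ` {..<length I})"
proof -
  let ?M = "Max (completion I sch ` {..<length I})"
  have ne: "completion I sch ` {..<length I} \<noteq> {}"
    using assms(2) by (simp add: lessThan_empty_iff)
  have "(\<Union>i<length I. {arr (I ! i)..<completion I sch i}) = {0..<?M}"
    using assms(3) by (auto simp: Max_gr_iff[OF _ ne])
  moreover have "0 \<le> ?M"
    using arr_le_completion[OF assms(1)] assms(2,3) ne by (auto simp: Max_ge_iff)
  ultimately show ?thesis
    unfolding awake_def by simp
qed

lemma sum_work_le_procs_mult_awake:
  assumes "valid_schedule p I sch" "I \<noteq> []" "\<forall>i<length I. arr (I ! i) = 0"
  shows "(\<Sum>i<length I. work I sch i) \<le> real p * awake I sch"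
proof -
  let ?M = "awake I sch"
  have le_M: "completion I sch i \<le> ?M" if "i < length I" for i
    using that awake_eq_Max_completion[OF assms] by simp
  have "0 \<le> ?M"
    unfolding awake_def by simp
  have eps: "(\<Sum>i<length I. work I sch i) \<le> real p * (?M + d)" if "0 < d" for d
  proof -
    have "(\<Sum>i<length I. work I sch i) \<le> (\<Sum>i<length I. integral {0..?M + d} (alloc sch i))"
      using work_le_integral_alloc[OF assms(1)] le_M assms(3) that
      by (intro sum_mono) force
    also have "\<dots> \<le> real p * (?M + d)"
      using sum_integral_alloc_le[OF assms(1), of 0 "?M + d"] \<open>0 \<le> ?M\<close> that by simp
    finally show ?thesis .
  qed
  show ?thesis
  proof (rule field_le_epsilon)
    fix e :: real assume "0 < e"
    have "real p * (e / (real p + 1)) \<le> e"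
      using \<open>0 < e\<close> by (simp add: field_simps)
    then show "(\<Sum>i<length I. work I sch i) \<le> real p * ?M + e"
      using eps[of "e / (real p + 1)"] \<open>0 < e\<close> by (simp add: distrib_left)
  qed
qed

lemma OPT_le_awake:
  assumes "valid_schedule p I sch"
  shows "OPT p I \<le> awake I sch"
  unfolding OPT_def
proof (rule cInf_lower)
  show "awake I sch \<in> awake I ` {sch. valid_schedule p I sch}"
    using assms by blast
  show "bdd_below (awake I ` {sch. valid_schedule p I sch})"
    by (rule bdd_belowI[where m = 0]) (auto simp: awake_def)
qed

definition uniform_schedule :: "bool \<Rightarrow> real \<Rightarrow> schedule" where
  "uniform_schedule ch k = ((\<lambda>_. ch), (\<lambda>_ s. if 0 \<le> s then k else 0))"

lemma choice_uniform_schedule [simp]: "choice (uniform_schedule ch k) i = ch"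
  by (simp add: uniform_schedule_def choice_def)

lemma alloc_uniform_schedule: "alloc (uniform_schedule ch k) i s = (if 0 \<le> s then k else 0)"
  by (simp add: uniform_schedule_def alloc_def)

lemma integral_alloc_uniform_schedule:
  assumes "0 \<le> T"
  shows "integral {0..T} (alloc (uniform_schedule ch k) i) = k * T"
proof -
  have "integral {0..T} (alloc (uniform_schedule ch k) i) = integral {0..T} (\<lambda>_. k)"
    by (rule integral_cong) (simp add: alloc_uniform_schedule)
  with assms show ?thesis
    by simp
qed

lemma done_by_uniform_schedule:
  assumes "i < length I" "arr (I ! i) = 0" "work I (uniform_schedule ch k) i = w" "0 < w" "0 < k"
  shows "done_by I (uniform_schedule ch k) i T \<longleftrightarrow> w / k \<le> T"
proof
  assume "done_by I (uniform_schedule ch k) i T"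
  then have "0 \<le> T" "w \<le> k * T"
    using assms integral_alloc_uniform_schedule unfolding done_by_def by auto
  with assms(5) show "w / k \<le> T"
    by (simp add: field_simps)
next
  assume "w / k \<le> T"
  moreover have "0 \<le> w / k"
    using assms(4,5) by simp
  ultimately have "0 \<le> T"
    by linarith
  have "w \<le> k * T"
    using \<open>w / k \<le> T\<close> assms(5) by (simp add: field_simps)
  with \<open>0 \<le> T\<close> show "done_by I (uniform_schedule ch k) i T"
    using assms integral_alloc_uniform_schedule unfolding done_by_def by simp
qed

lemma completion_uniform_schedule:
  assumes "i < length I" "arr (I ! i) = 0" "work I (uniform_schedule ch k) i = w" "0 < w" "0 < k"
  shows "completion I (uniform_schedule ch k) i = w / k"
proof -
  have "{T. done_by I (uniform_schedule ch k) i T} = {w / k..}"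
    using done_by_uniform_schedule[OF assms] by auto
  then show ?thesis
    unfolding completion_def by simp
qed

lemma valid_uniform_schedule:
  assumes "\<forall>i<length I. arr (I ! i) = 0" "\<forall>i<length I. work I (uniform_schedule ch k) i = w"
    and "0 < w" "0 < k" "\<not> ch \<longrightarrow> k \<le> 1" "real (length I) * k \<le> real p"
  shows "valid_schedule p I (uniform_schedule ch k)"
proof -
  have "alloc (uniform_schedule ch k) i integrable_on {a..b}" for i a b
    unfolding alloc_uniform_schedule[abs_def] integrable_restrict_Int[of "{0..}", simplified]
    by (simp add: integrable_const_ivl)
  moreover have "\<exists>T. done_by I (uniform_schedule ch k) i T" if "i < length I" for i
    using done_by_uniform_schedule[OF that, of ch k w] assms that by auto
  moreover have "(\<Sum>i<length I. alloc (uniform_schedule ch k) i s) \<le> real p" for s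
    using assms(4,6) by (simp add: alloc_uniform_schedule)
  ultimately show ?thesis
    using assms unfolding valid_schedule_def by (auto simp: alloc_uniform_schedule)
qed

lemma OPT_le_uniform_schedule:
  assumes "I \<noteq> []" "\<forall>i<length I. arr (I ! i) = 0"
    and "\<forall>i<length I. work I (uniform_schedule ch k) i = w"
    and "0 < w" "0 < k" "\<not> ch \<longrightarrow> k \<le> 1" "real (length I) * k \<le> real p"
  shows "OPT p I \<le> w / k"
proof -
  have valid: "valid_schedule p I (uniform_schedule ch k)"
    using assms(2-) by (rule valid_uniform_schedule)
  have "completion I (uniform_schedule ch k) ` {..<length I} = {w / k}"
    using completion_uniform_schedule assms(1-5) by force
  then have "awake I (uniform_schedule ch k) = w / k"
    using awake_eq_Max_completion[OF valid assms(1,2)] by simp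
  with valid show ?thesis
    using OPT_le_awake by metis
qed

definition batch :: "nat \<Rightarrow> real \<Rightarrow> task list" where
  "batch m \<pi> = replicate m (1, \<pi>, 0)"

lemma length_batch [simp]: "length (batch m \<pi>) = m"
  by (simp add: batch_def)

lemma batch_nth [simp]:
  assumes "i < m"
  shows ser_batch_nth: "ser (batch m \<pi> ! i) = 1"
    and par_batch_nth: "par (batch m \<pi> ! i) = \<pi>"
    and arr_batch_nth: "arr (batch m \<pi> ! i) = 0"
  using assms by (simp_all add: batch_def ser_def par_def arr_def)

lemma work_batch:
  "i < m \<Longrightarrow> work (batch m \<pi>) sch i = (if choice sch i then \<pi> else 1)"
  by (simp add: work_def)

lemma batch_eq_Nil_iff [simp]: "batch m \<pi> = [] \<longleftrightarrow> m = 0"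
  by (simp add: batch_def)

lemma valid_instance_batch:
  "1 \<le> \<pi> \<Longrightarrow> \<pi> \<le> real p \<Longrightarrow> valid_instance p (batch m \<pi>)"
  by (simp add: valid_instance_def valid_task_def batch_def ser_def par_def arr_def)

lemma completion_pos:
  assumes "valid_schedule p I sch" "i < length I" "0 \<le> arr (I ! i)" "0 < work I sch i" "0 < p"
  shows "0 < completion I sch i"
proof -
  have "arr (I ! i) + work I sch i / real p \<le> completion I sch i"
    using assms alloc_le_procs by (intro completion_ge_work_div_rate) auto
  moreover have "0 < work I sch i / real p"
    using assms(4,5) by simp
  ultimately show ?thesis
    using assms(3) by linarith
qed

lemma dao_pwo_batch_choice_eq:
  assumes S: "dao_pwo_scheduler p S"
    and "1 \<le> a" "a \<le> real p" "1 \<le> b" "b \<le> real p" "i < m"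
  shows "choice (S (batch m a)) i = choice (S (batch m b)) i"
proof -
  have inst: "valid_instance p (batch m a)" "valid_instance p (batch m b)"
    using assms(2-5) by (simp_all add: valid_instance_batch)
  have "0 < p"
    using assms(2,3) by simp
  have not_done: "\<not> completion (batch m \<pi>) (S (batch m \<pi>)) j \<le> 0"
    if "valid_instance p (batch m \<pi>)" "1 \<le> \<pi>" "j < m" for \<pi> j
  proof -
    have "0 < completion (batch m \<pi>) (S (batch m \<pi>)) j"
      using S that \<open>0 < p\<close> unfolding dao_pwo_scheduler_def
      by (intro completion_pos) (auto simp: work_batch)
    then show ?thesis
      by simp
  qed
  have "obs_equal (batch m a) (S (batch m a)) (batch m b) (S (batch m b)) 0"
    using not_done[OF inst(1) assms(2)] not_done[OF inst(2) assms(4)]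
    unfolding obs_equal_def by auto
  with S inst assms(6) show ?thesis
    unfolding dao_pwo_scheduler_def by simp
qed

lemma one_le_awake_batch_if_serial:
  assumes "valid_schedule p (batch m \<pi>) sch" "i < m" "\<not> choice sch i"
  shows "1 \<le> awake (batch m \<pi>) sch"
proof -
  have "\<forall>s. alloc sch i s \<le> 1"
    using assms unfolding valid_schedule_def by simp
  then have "1 \<le> completion (batch m \<pi>) sch i"
    using completion_ge_work_div_rate[OF assms(1), of i 1] assms by (simp add: work_batch)
  also have "\<dots> \<le> awake (batch m \<pi>) sch"
    using awake_eq_Max_completion[OF assms(1)] assms(2) by simp
  finally show ?thesis .
qed

lemma awake_batch_ge_if_parallel:
  assumes "valid_schedule p (batch m \<pi>) sch" "0 < m" "\<forall>i<m. choice sch i"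
  shows "real m * \<pi> \<le> real p * awake (batch m \<pi>) sch"
proof -
  have "(\<Sum>i<m. work (batch m \<pi>) sch i) = real m * \<pi>"
    using assms(3) by (simp add: work_batch)
  then show ?thesis
    using sum_work_le_procs_mult_awake[OF assms(1)] assms(2) by simp
qed

lemma OPT_batch_le_parallel:
  assumes "0 < m" "0 < p" "0 < \<pi>"
  shows "OPT p (batch m \<pi>) \<le> real m * \<pi> / real p"
  using OPT_le_uniform_schedule[of "batch m \<pi>" True "real p / real m" \<pi> p] assms
  by (simp add: work_batch mult.commute)

lemma OPT_batch_le_serial:
  assumes "0 < m" "m \<le> p"
  shows "OPT p (batch m \<pi>) \<le> 1"
  using OPT_le_uniform_schedule[of "batch m \<pi>" False 1 1 p] assms
  by (simp add: work_batch)

lemma dao_pwo_batch_lower_bound: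
  assumes S: "dao_pwo_scheduler p S" and "1 \<le> p" "0 < m"
    and m_sqrt: "real m * sqrt (real p) \<le> real p" and sqrt_m: "sqrt (real p) \<le> 2 * real m"
  shows "\<exists>\<pi>. valid_instance p (batch m \<pi>) \<and>
           1/2 * sqrt (real p) * OPT p (batch m \<pi>) \<le> awake (batch m \<pi>) (S (batch m \<pi>))"
proof -
  have valid: "valid_instance p I \<Longrightarrow> valid_schedule p I (S I)" for I
    using S unfolding dao_pwo_scheduler_def by blast
  have "m \<le> p"
    using m_sqrt mult_left_mono[of 1 "sqrt (real p)" "real m"] \<open>1 \<le> p\<close> by simp
  consider (serial) i where "i < m" "\<not> choice (S (batch m 1)) i"
    | (parallel) "\<forall>i<m. choice (S (batch m (real p))) i"
    using dao_pwo_batch_choice_eq[OF S, of 1 "real p"] \<open>1 \<le> p\<close> by fastforce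
  then show ?thesis
  proof cases
    case serial
    have inst: "valid_instance p (batch m 1)"
      using \<open>1 \<le> p\<close> by (simp add: valid_instance_batch)
    have "1/2 * sqrt (real p) * OPT p (batch m 1) \<le> 1/2 * sqrt (real p) * (real m / real p)"
      using OPT_batch_le_parallel[of m p 1] \<open>0 < m\<close> \<open>1 \<le> p\<close> by (intro mult_left_mono) auto
    also have "\<dots> \<le> 1"
      using m_sqrt \<open>1 \<le> p\<close> by (simp add: field_simps)
    also have "\<dots> \<le> awake (batch m 1) (S (batch m 1))"
      using one_le_awake_batch_if_serial[OF valid[OF inst] serial] .
    finally show ?thesis
      using inst by blast
  next
    case parallel
    have inst: "valid_instance p (batch m (real p))"
      using \<open>1 \<le> p\<close> by (simp add: valid_instance_batch)
    have "1/2 * sqrt (real p) * OPT p (batch m (real p)) \<le> 1/2 * sqrt (real p)"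
      using OPT_batch_le_serial[OF \<open>0 < m\<close> \<open>m \<le> p\<close>] by (intro mult_left_le) auto
    also have "\<dots> \<le> real m"
      using sqrt_m by linarith
    also have "\<dots> \<le> awake (batch m (real p)) (S (batch m (real p)))"
      using awake_batch_ge_if_parallel[OF valid[OF inst] \<open>0 < m\<close> parallel] \<open>1 \<le> p\<close> by simp
    finally show ?thesis
      using inst by blast
  qed
qed

lemma nat_floor_bounds:
  fixes x :: real
  assumes "1 \<le> x"
  shows "0 < nat \<lfloor>x\<rfloor>" "real (nat \<lfloor>x\<rfloor>) \<le> x" "x \<le> 2 * real (nat \<lfloor>x\<rfloor>)"
proof -
  have "1 \<le> \<lfloor>x\<rfloor>"
    using assms by (simp add: le_floor_iff)
  then have "real (nat \<lfloor>x\<rfloor>) = of_int \<lfloor>x\<rfloor>"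
    by simp
  with \<open>1 \<le> \<lfloor>x\<rfloor>\<close> show "0 < nat \<lfloor>x\<rfloor>" "real (nat \<lfloor>x\<rfloor>) \<le> x" "x \<le> 2 * real (nat \<lfloor>x\<rfloor>)"
    by linarith+
qed

theorem proposition8p5:
  "\<exists>c>0. \<forall>p::nat. 1 \<le> p \<longrightarrow>
     (\<forall>S. dao_pwo_scheduler p S \<longrightarrow>
        (\<exists>I. valid_instance p I \<and> I \<noteq> [] \<and>
             c * sqrt (real p) * OPT p I \<le> awake I (S I)))"
proof (intro exI[of _ "1/2"] conjI allI impI)
  show "(0::real) < 1/2"
    by simp
  fix p :: nat and S
  assume "1 \<le> p" and S: "dao_pwo_scheduler p S"
  define m where "m = nat \<lfloor>sqrt (real p)\<rfloor>"
  have "1 \<le> sqrt (real p)"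
    using \<open>1 \<le> p\<close> by simp
  note m = nat_floor_bounds[OF this, folded m_def]
  have "real m * sqrt (real p) \<le> real p"
    using mult_right_mono[OF m(2), of "sqrt (real p)"] by simp
  with dao_pwo_batch_lower_bound[OF S \<open>1 \<le> p\<close> m(1) _ m(3)] m(1)
  show "\<exists>I. valid_instance p I \<and> I \<noteq> [] \<and> 1/2 * sqrt (real p) * OPT p I \<le> awake I (S I)"
    by fastforce
qed

end
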